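(* Let $G$ be a directed acyclic contractor network and let $d>0$ be the maximum number of edges in a directed path of $G$. For $S\subseteq\mathcal V$, $\mathbf y\in\{0,1\}^S$ and $\mathbf z\in\{0,1\}^{S'}$ with $S'\supseteq\bigcup_{i\in S}\delta_{\mathrm{in}}(i)$, put $$q_S(\mathbf y\mid\mathbf z)=\prod_{i\in S}p_i(\mathbf z)^{y_i}\big(1-p_i(\mathbf z)\big)^{1-y_i},\qquad p_i(\mathbf z)=(1-\alpha_i)r_i+\alpha_i\sum_{j\in\delta_{\mathrm{in}}(i)}w_{ij}z_j.$$ Then for every $t\ge d$ and every $\mathbf x\in\{0,1\}^n$, $\Pr(\mathbf X^t=\mathbf x)=\pi(\mathbf x)$, and $$\Pr(\mathbf X^t=\mathbf x)=\sum_{\mathbf z^1\in\{0,1\}^{\Delta^1}}\cdots\sum_{\mathbf z^d\in\{0,1\}^{\Delta^d}}q_{\mathcal V}(\mathbf x\mid\mathbf z^1)\prod_{k=1}^{d-1}q_{\Delta^k}(\mathbf z^k\mid\mathbf z^{k+1})\prod_{i\in\Delta^d}r_i^{z^d_i}(1-r_i)^{1-z^d_i},$$ where $\mathbf z^k$ plays the role of the state of the nodes of $\Delta^k$ at time $t-k$. (Here every node of $\Delta^d$ is a pure principal, and $\delta_{\mathrm{in}}(i)\subseteq\Delta^{k+1}$ for $i\in\Delta^k$, so all terms are well defined.)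
   Context: A contractor network is a finite directed graph $G=(\mathcal V,\mathcal E)$ with $n=|\mathcal V|$ nodes, without multiple edges, in which every node has at least one incident edge; here $G$ is assumed acyclic (no directed cycles and no self-loops). For $i\in\mathcal V$ let $\delta_{\mathrm{in}}(i)=\{j:(j,i)\in\mathcal E\}$ and $\delta_{\mathrm{out}}(i)=\{k:(i,k)\in\mathcal E\}$. A node $i$ is a pure principal if $\delta_{\mathrm{in}}(i)=\emptyset$, a pure obligee if $\delta_{\mathrm{out}}(i)=\emptyset$, and an intermediary otherwise. Each edge $(j,i)\in\mathcal E$ carries a weight $w_{ij}>0$; $w_{ij}=0$ if $(j,i)\notin\mathcal E$; for every $i$ with $\delta_{\mathrm{in}}(i)\neq\emptyset$, $\sum_{j\in\delta_{\mathrm{in}}(i)}w_{ij}=1$. Risk scores: $r_i\in(0,1)$ if $i$ is not a pure obligee, $r_i=0$ for pure obligees. Propagation parameters: $\alpha_i=0$ for pure principals, $\alpha_i=1$ for pure obligees, $\alpha_i\in(0,1)$ for intermediaries. Failure process $(\mathbf X^t)_{t\in\mathbb N}$ on $\{0,1\}^n$: independent $X_i^0\sim\mathrm{Bernoulli}(r_i)$; for $t\ge0$, conditionally on $(\mathbf X^0,\dots,\mathbf X^t)$ the $X_i^{t+1}$ are independent with $X_i^{t+1}\sim\mathrm{Bernoulli}\big((1-\alpha_i)r_i+\alpha_i\sum_{j\in\delta_{\mathrm{in}}(i)}w_{ij}X_j^t\big)$; $\pi(\mathbf x)=\lim_t\Pr(\mathbf X^t=\mathbf x)$ is its stationary distribution.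 In-neighbor layers: $\Delta^1=\bigcup_{i\in\mathcal V}\delta_{\mathrm{in}}(i)$ and, for $k>1$, $\Delta^k=\bigcup_{i\in\Delta^{k-1}}\delta_{\mathrm{in}}(i)$; equivalently $\Delta^k$ is the set of nodes from which some directed path with $k$ edges starts. *)

theory Defs
  imports "HOL-Analysis.Analysis" "HOL-Library.FuncSet"
begin

text \<open>Nodes are the elements of a finite type 'v (so n = CARD('v)); the edge set is
  E :: ('v \<times> 'v) set, (j,i) \<in> E meaning an edge from j to i. Weights: w i j is w_{ij}
  (weight of the edge (j,i)). States in {0,1}^S are functions 'v \<Rightarrow> bool, True = 1,
  that are False outside S.\<close>

definition din :: "('v \<times> 'v) set \<Rightarrow> 'v \<Rightarrow> 'v set" where
  "din E i = {j. (j, i) \<in> E}"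

definition dout :: "('v \<times> 'v) set \<Rightarrow> 'v \<Rightarrow> 'v set" where
  "dout E i = {k. (i, k) \<in> E}"

definition pure_principal :: "('v \<times> 'v) set \<Rightarrow> 'v \<Rightarrow> bool" where
  "pure_principal E i \<longleftrightarrow> din E i = {}"

definition pure_obligee :: "('v \<times> 'v) set \<Rightarrow> 'v \<Rightarrow> bool" where
  "pure_obligee E i \<longleftrightarrow> dout E i = {}"

definition intermediary :: "('v \<times> 'v) set \<Rightarrow> 'v \<Rightarrow> bool" where
  "intermediary E i \<longleftrightarrow> \<not> pure_principal E i \<and> \<not> pure_obligee E i"

definition contractor_network ::
  "('v::finite \<times> 'v) set \<Rightarrow> ('v \<Rightarrow> 'v \<Rightarrow> real) \<Rightarrow> ('v \<Rightarrow> real) \<Rightarrow> ('v \<Rightarrow> real) \<Rightarrow> bool" where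
  "contractor_network E w r \<alpha> \<longleftrightarrow>
     (\<forall>i. din E i \<union> dout E i \<noteq> {}) \<and>
     acyclic E \<and>
     (\<forall>i j. (j, i) \<in> E \<longrightarrow> w i j > 0) \<and>
     (\<forall>i j. (j, i) \<notin> E \<longrightarrow> w i j = 0) \<and>
     (\<forall>i. din E i \<noteq> {} \<longrightarrow> (\<Sum>j\<in>din E i. w i j) = 1) \<and>
     (\<forall>i. \<not> pure_obligee E i \<longrightarrow> 0 < r i \<and> r i < 1) \<and>
     (\<forall>i. pure_obligee E i \<longrightarrow> r i = 0) \<and>
     (\<forall>i. pure_principal E i \<longrightarrow> \<alpha> i = 0) \<and>
     (\<forall>i. pure_obligee E i \<longrightarrow> \<alpha> i = 1) \<and>
     (\<forall>i. intermediary E i \<longrightarrow> 0 < \<alpha> i \<and> \<alpha> i < 1)"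

definition pfail :: "('v::finite \<times> 'v) set \<Rightarrow> ('v \<Rightarrow> 'v \<Rightarrow> real) \<Rightarrow> ('v \<Rightarrow> real) \<Rightarrow> ('v \<Rightarrow> real)
    \<Rightarrow> ('v \<Rightarrow> bool) \<Rightarrow> 'v \<Rightarrow> real" where
  "pfail E w r \<alpha> z i = (1 - \<alpha> i) * r i + \<alpha> i * (\<Sum>j\<in>din E i. w i j * of_bool (z j))"

definition qcond :: "('v::finite \<times> 'v) set \<Rightarrow> ('v \<Rightarrow> 'v \<Rightarrow> real) \<Rightarrow> ('v \<Rightarrow> real) \<Rightarrow> ('v \<Rightarrow> real)
    \<Rightarrow> 'v set \<Rightarrow> ('v \<Rightarrow> bool) \<Rightarrow> ('v \<Rightarrow> bool) \<Rightarrow> real" where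
  "qcond E w r \<alpha> S y z =
     (\<Prod>i\<in>S. pfail E w r \<alpha> z i ^ (of_bool (y i) :: nat) * (1 - pfail E w r \<alpha> z i) ^ (1 - of_bool (y i)))"

definition cfgs :: "'v set \<Rightarrow> ('v \<Rightarrow> bool) set" where
  "cfgs S = {z. \<forall>i. i \<notin> S \<longrightarrow> z i = False}"

text \<open>Law of the failure process: Pr(X^t = x). X^0 has independent Bernoulli(r_i)
  coordinates, and X^{t+1} given the past has independent Bernoulli(p_i(X^t)) coordinates.\<close>
fun prob_state :: "('v::finite \<times> 'v) set \<Rightarrow> ('v \<Rightarrow> 'v \<Rightarrow> real) \<Rightarrow> ('v \<Rightarrow> real) \<Rightarrow> ('v \<Rightarrow> real)
    \<Rightarrow> nat \<Rightarrow> ('v \<Rightarrow> bool) \<Rightarrow> real" where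
  "prob_state E w r \<alpha> 0 x =
     (\<Prod>i\<in>UNIV. r i ^ (of_bool (x i) :: nat) * (1 - r i) ^ (1 - of_bool (x i)))"
| "prob_state E w r \<alpha> (Suc t) x =
     (\<Sum>y\<in>UNIV. prob_state E w r \<alpha> t y * qcond E w r \<alpha> UNIV x y)"

definition stationary :: "('v::finite \<times> 'v) set \<Rightarrow> ('v \<Rightarrow> 'v \<Rightarrow> real) \<Rightarrow> ('v \<Rightarrow> real) \<Rightarrow> ('v \<Rightarrow> real)
    \<Rightarrow> ('v \<Rightarrow> bool) \<Rightarrow> real" where
  "stationary E w r \<alpha> x = lim (\<lambda>t. prob_state E w r \<alpha> t x)"

text \<open>In-neighbour layers: Delta 1 = union of all din i, Delta (k+1) = union of din i over Delta k.
  (Delta 0 = V is only an auxiliary base case.)\<close>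
fun Delta :: "('v \<times> 'v) set \<Rightarrow> nat \<Rightarrow> 'v set" where
  "Delta E 0 = UNIV"
| "Delta E (Suc k) = (\<Union>i\<in>Delta E k. din E i)"

definition has_path_len :: "('v \<times> 'v) set \<Rightarrow> nat \<Rightarrow> bool" where
  "has_path_len E k \<longleftrightarrow> (\<exists>xs. length xs = Suc k \<and> (\<forall>m<k. (xs ! m, xs ! Suc m) \<in> E))"

definition max_path_edges :: "('v \<times> 'v) set \<Rightarrow> nat" where
  "max_path_edges E = Max {k. has_path_len E k}"

end

theory Submission imports Defs begin

text \<open>In an acyclic network the state of a node at time s+1 depends only on the states of its
  in-neighbours at time s. Hence the marginal law of X^s on the layer \<Delta>^k is obtained from
  the marginal law of X^(s-1) on \<Delta>^(k+1) through the kernel q_{\<Delta>^k}. The last layer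
  \<Delta>^d consists of pure principals, whose states are independent Bernoulli(r_i) at every
  time. Unrolling d such steps from time t down to t - d gives the stated formula, which does
  not depend on t \<ge> d; so the sequence Pr(X^t = x) is eventually constant and \<pi>(x) is its
  constant value.\<close>

definition marginal ::
  "('v::finite \<times> 'v) set \<Rightarrow> ('v \<Rightarrow> 'v \<Rightarrow> real) \<Rightarrow> ('v \<Rightarrow> real) \<Rightarrow> ('v \<Rightarrow> real)
    \<Rightarrow> nat \<Rightarrow> 'v set \<Rightarrow> ('v \<Rightarrow> bool) \<Rightarrow> real" where
  "marginal E w r \<alpha> s S z = (\<Sum>y | \<forall>i\<in>S. y i = z i. prob_state E w r \<alpha> s y)"

definition bernoulli_prod :: "('v \<Rightarrow> real) \<Rightarrow> 'v set \<Rightarrow> ('v \<Rightarrow> bool) \<Rightarrow> real" where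
  "bernoulli_prod r S z = (\<Prod>i\<in>S. r i ^ (of_bool (z i) :: nat) * (1 - r i) ^ (1 - of_bool (z i)))"

lemma sum_extensions_prod:
  fixes h :: "'v::finite \<Rightarrow> bool \<Rightarrow> 'a::comm_semiring_1"
  assumes "\<And>i. h i True + h i False = 1"
  shows "(\<Sum>y | \<forall>i\<in>S. y i = z i. \<Prod>i\<in>UNIV. h i (y i)) = (\<Prod>i\<in>S. h i (z i))"
proof -
  have extensions: "{y. \<forall>i\<in>S. y i = z i} = PiE UNIV (\<lambda>i. if i \<in> S then {z i} else UNIV)"
    by (auto simp: PiE_iff split: if_splits; metis)
  have "(\<Sum>y | \<forall>i\<in>S. y i = z i. \<Prod>i\<in>UNIV. h i (y i))
      = (\<Prod>i\<in>UNIV. \<Sum>b\<in>(if i \<in> S then {z i} else UNIV). h i b)"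
    unfolding extensions by (rule prod_sum_PiE[symmetric]) auto
  also have "\<dots> = (\<Prod>i\<in>UNIV. if i \<in> S then h i (z i) else 1)"
    using assms by (intro prod.cong) (auto simp: UNIV_bool add.commute)
  also have "\<dots> = (\<Prod>i\<in>S. h i (z i))"
    by (simp add: prod.If_cases)
  finally show ?thesis .
qed

lemma sum_extensions_qcond:
  "(\<Sum>y | \<forall>i\<in>S. y i = z i. qcond E w r \<alpha> UNIV y u) = qcond E w r \<alpha> S z u"
  unfolding qcond_def by (rule sum_extensions_prod) simp

lemma qcond_cong_din:
  assumes "\<And>i j. i \<in> S \<Longrightarrow> j \<in> din E i \<Longrightarrow> u j = u' j"
  shows "qcond E w r \<alpha> S z u = qcond E w r \<alpha> S z u'"
proof -
  have "pfail E w r \<alpha> u i = pfail E w r \<alpha> u' i" if "i \<in> S" for i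
    using assms that unfolding pfail_def by (auto intro!: sum.cong)
  then show ?thesis unfolding qcond_def by (intro prod.cong) auto
qed

lemma marginal_UNIV: "marginal E w r \<alpha> s UNIV x = prob_state E w r \<alpha> s x"
proof -
  have "{y. \<forall>i\<in>UNIV. y i = x i} = {x}" by (auto simp: fun_eq_iff)
  then show ?thesis by (simp add: marginal_def)
qed

lemma marginal_0: "marginal E w r \<alpha> 0 S z = bernoulli_prod r S z"
  unfolding marginal_def bernoulli_prod_def prob_state.simps
  by (rule sum_extensions_prod) simp

text \<open>Chapman--Kolmogorov for the marginal on S: the kernel q_S reads the previous state
  only on in-neighbours of S, so that state enters only through its restriction to T.\<close>
lemma marginal_Suc:
  assumes din_T: "\<And>i. i \<in> S \<Longrightarrow> din E i \<subseteq> T"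
  shows "marginal E w r \<alpha> (Suc s) S z
    = (\<Sum>z'\<in>cfgs T. qcond E w r \<alpha> S z z' * marginal E w r \<alpha> s T z')"
proof -
  define P where "P = prob_state E w r \<alpha> s"
  define restrict_T where "restrict_T = (\<lambda>u::'a \<Rightarrow> bool. \<lambda>j. j \<in> T \<and> u j)"
  have restrict_T_eq: "restrict_T u = z' \<longleftrightarrow> (\<forall>i\<in>T. u i = z' i)" if "z' \<in> cfgs T" for u z'
    using that by (auto simp: cfgs_def restrict_T_def fun_eq_iff)
  have "marginal E w r \<alpha> (Suc s) S z
      = (\<Sum>y | \<forall>i\<in>S. y i = z i. \<Sum>u\<in>UNIV. P u * qcond E w r \<alpha> UNIV y u)"
    by (simp add: marginal_def P_def)
  also have "\<dots> = (\<Sum>u\<in>UNIV. P u * qcond E w r \<alpha> S z u)"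
    by (subst sum.swap) (simp add: sum_distrib_left[symmetric] sum_extensions_qcond)
  also have "\<dots> = (\<Sum>u\<in>UNIV. P u * qcond E w r \<alpha> S z (restrict_T u))"
    using din_T by (intro sum.cong refl arg_cong2[where f = "(*)"] qcond_cong_din)
      (auto simp: restrict_T_def)
  also have "\<dots> = (\<Sum>z'\<in>cfgs T. \<Sum>u | u \<in> UNIV \<and> restrict_T u = z'.
                    P u * qcond E w r \<alpha> S z (restrict_T u))"
    by (rule sum.group[symmetric]) (auto simp: cfgs_def restrict_T_def)
  also have "\<dots> = (\<Sum>z'\<in>cfgs T. \<Sum>u | \<forall>i\<in>T. u i = z' i. P u * qcond E w r \<alpha> S z z')"
  proof (rule sum.cong[OF refl])
    fix z' assume "z' \<in> cfgs T"
    note restrict_T_eq[OF this]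
    then show "(\<Sum>u | u \<in> UNIV \<and> restrict_T u = z'. P u * qcond E w r \<alpha> S z (restrict_T u))
      = (\<Sum>u | \<forall>i\<in>T. u i = z' i. P u * qcond E w r \<alpha> S z z')"
      by (intro sum.cong) (auto, metis)
  qed
  also have "\<dots> = (\<Sum>z'\<in>cfgs T. qcond E w r \<alpha> S z z' * marginal E w r \<alpha> s T z')"
    by (simp add: marginal_def P_def sum_distrib_left mult.commute)
  finally show ?thesis .
qed

lemma cfgs_empty [simp]: "cfgs {} = {\<lambda>_. False}"
  by (auto simp: cfgs_def)

lemma marginal_empty: "marginal E w r \<alpha> s {} z = 1"
proof (induction s arbitrary: z)
  case 0
  show ?case by (simp add: marginal_0 bernoulli_prod_def)
next
  case (Suc s)
  with Suc show ?case by (subst marginal_Suc[where T = "{}"]) (auto simp: qcond_def)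
qed

lemma marginal_pure_principals:
  assumes "\<And>i. i \<in> S \<Longrightarrow> din E i = {} \<and> \<alpha> i = 0"
  shows "marginal E w r \<alpha> s S z = bernoulli_prod r S z"
proof (cases s)
  case 0
  then show ?thesis by (simp add: marginal_0)
next
  case (Suc s')
  have "qcond E w r \<alpha> S z u = bernoulli_prod r S z" for u
    using assms unfolding qcond_def bernoulli_prod_def pfail_def by (intro prod.cong) auto
  then show ?thesis unfolding Suc
    using assms by (subst marginal_Suc[where T = "{}"]) (auto simp: marginal_empty)
qed

lemma Delta_imp_path:
  "j \<in> Delta E k \<Longrightarrow> \<exists>xs. length xs = Suc k \<and> xs ! 0 = j \<and> (\<forall>m<k. (xs ! m, xs ! Suc m) \<in> E)"
proof (induction k arbitrary: j)
  case 0
  show ?case by (intro exI[of _ "[j]"]) auto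
next
  case (Suc k)
  then obtain i where i: "i \<in> Delta E k" "(j, i) \<in> E" by (auto simp: din_def)
  from Suc.IH[OF i(1)] obtain xs
    where xs: "length xs = Suc k" "xs ! 0 = i" "\<forall>m<k. (xs ! m, xs ! Suc m) \<in> E"
    by blast
  have "((j # xs) ! m, (j # xs) ! Suc m) \<in> E" if "m < Suc k" for m
    using that xs i by (cases m) auto
  with xs show ?case by (intro exI[of _ "j # xs"]) auto
qed

lemma path_nth_trancl:
  assumes "\<forall>m<k. (xs ! m, xs ! Suc m) \<in> E" and "a < b" and "b \<le> k"
  shows "(xs ! a, xs ! b) \<in> E\<^sup>+"
  using assms(2,3)
proof (induction b rule: less_induct)
  case (less b)
  then obtain b' where b: "b = Suc b'" "a \<le> b'"
    by (metis less_imp_Suc_add le_add1)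
  with less.prems assms(1) have edge: "(xs ! b', xs ! b) \<in> E" by auto
  show ?case
  proof (cases "a = b'")
    case True
    with edge show ?thesis by auto
  next
    case False
    with b less have "(xs ! a, xs ! b') \<in> E\<^sup>+" by auto
    then show ?thesis using edge by (rule trancl_into_trancl)
  qed
qed

lemma acyclic_has_path_len_less_card:
  fixes E :: "('v::finite \<times> 'v) set"
  assumes "acyclic E" and "has_path_len E k"
  shows "k < CARD('v)"
proof -
  obtain xs where xs: "length xs = Suc k" "\<forall>m<k. (xs ! m, xs ! Suc m) \<in> E"
    using assms(2) unfolding has_path_len_def by blast
  have "xs ! a \<noteq> xs ! b" if "a < b" "b \<le> k" for a b
    using path_nth_trancl[OF xs(2) that] assms(1) by (auto simp: acyclic_def)
  then have "distinct xs"
    using xs(1) unfolding distinct_conv_nth by (metis less_Suc_eq_le linorder_neqE_nat)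
  then have "Suc k = card (set xs)" using xs by (simp add: distinct_card)
  also have "\<dots> \<le> CARD('v)" by (rule card_mono) auto
  finally show ?thesis by simp
qed

text \<open>In the last layer every node is a pure principal: an in-neighbour would start a path
  longer than the longest one.\<close>
lemma din_Delta_max_path_edges:
  fixes E :: "('v::finite \<times> 'v) set"
  assumes "acyclic E" and "i \<in> Delta E (max_path_edges E)"
  shows "din E i = {}"
proof (rule ccontr)
  assume "din E i \<noteq> {}"
  with assms(2) obtain j where "j \<in> Delta E (Suc (max_path_edges E))" by auto
  then have "has_path_len E (Suc (max_path_edges E))"
    unfolding has_path_len_def by (blast dest: Delta_imp_path)
  moreover have "finite {k. has_path_len E k}"
    by (rule finite_subset[of _ "{..<CARD('v)}"])
      (auto dest: acyclic_has_path_len_less_card[OF assms(1)])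
  ultimately have "Suc (max_path_edges E) \<le> max_path_edges E"
    unfolding max_path_edges_def by (intro Max_ge) auto
  then show False by simp
qed

lemma sum_PiE_insert:
  assumes "a \<notin> A"
  shows "(\<Sum>Z\<in>PiE (insert a A) F. g Z) = (\<Sum>y\<in>F a. \<Sum>Z\<in>PiE A F. g (Z(a := y)))"
proof -
  have "(\<Sum>Z\<in>PiE (insert a A) F. g Z) = (\<Sum>p\<in>F a \<times> PiE A F. g ((\<lambda>(y, Z). Z(a := y)) p))"
    unfolding PiE_insert_eq by (subst sum.reindex[OF inj_combinator[OF assms]]) (simp add: comp_def)
  then show ?thesis
    by (simp add: sum.cartesian_product split_def)
qed

text \<open>Weight of all chains z = Z k, Z (k+1), ..., Z d with Z j \<in> A j, where g j is the kernel
  from layer j to layer j+1 and h weighs the last layer.\<close>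
definition chain_sum ::
  "(nat \<Rightarrow> 'a set) \<Rightarrow> (nat \<Rightarrow> 'a \<Rightarrow> 'a \<Rightarrow> 'b::comm_semiring_1) \<Rightarrow> ('a \<Rightarrow> 'b) \<Rightarrow> nat \<Rightarrow> nat \<Rightarrow> 'a \<Rightarrow> 'b"
  where
  "chain_sum A g h d k z = (\<Sum>Z\<in>PiE {Suc k..d} A.
      g k z (Z (Suc k)) * (\<Prod>j\<in>{Suc k..<d}. g j (Z j) (Z (Suc j))) * h (Z d))"

lemma chain_sum_last:
  assumes "Suc k = d"
  shows "chain_sum A g h d k z = (\<Sum>y\<in>A d. g k z y * h y)"
proof -
  have "{Suc k..d} = insert d {}" using assms by auto
  with assms show ?thesis
    by (simp add: chain_sum_def sum_PiE_insert)
qed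

lemma chain_sum_step:
  assumes "Suc k < d"
  shows "chain_sum A g h d k z = (\<Sum>y\<in>A (Suc k). g k z y * chain_sum A g h d (Suc k) y)"
proof -
  have layers: "{Suc k..d} = insert (Suc k) {Suc (Suc k)..d}"
    and kernels: "{Suc k..<d} = insert (Suc k) {Suc (Suc k)..<d}"
    using assms by auto
  have "(\<Prod>j\<in>{Suc k..<d}. g j ((Z(Suc k := y)) j) ((Z(Suc k := y)) (Suc j)))
      = g (Suc k) y (Z (Suc (Suc k))) * (\<Prod>j\<in>{Suc (Suc k)..<d}. g j (Z j) (Z (Suc j)))"
    for Z y
    unfolding kernels by (subst prod.insert) (auto intro!: prod.cong)
  with assms show ?thesis
    unfolding chain_sum_def layers
    by (simp add: sum_PiE_insert sum_distrib_left mult_ac)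
qed

lemma marginal_Delta_chain_sum:
  fixes E :: "('v::finite \<times> 'v) set"
  assumes network: "contractor_network E w r \<alpha>" and d: "d = max_path_edges E"
    and "d \<le> t" and "k < d"
  shows "marginal E w r \<alpha> (t - k) (Delta E k) z
    = chain_sum (\<lambda>j. cfgs (Delta E j)) (\<lambda>j. qcond E w r \<alpha> (Delta E j))
        (bernoulli_prod r (Delta E d)) d k z"
proof -
  have unroll: "marginal E w r \<alpha> (t - j) (Delta E j) z
      = (\<Sum>y\<in>cfgs (Delta E (Suc j)).
          qcond E w r \<alpha> (Delta E j) z y * marginal E w r \<alpha> (t - Suc j) (Delta E (Suc j)) y)"
    if "j < d" for j z
  proof -
    have "t - j = Suc (t - Suc j)" using that \<open>d \<le> t\<close> by simp
    moreover have "marginal E w r \<alpha> (Suc (t - Suc j)) (Delta E j) z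
      = (\<Sum>y\<in>cfgs (Delta E (Suc j)).
          qcond E w r \<alpha> (Delta E j) z y * marginal E w r \<alpha> (t - Suc j) (Delta E (Suc j)) y)"
      by (rule marginal_Suc) auto
    ultimately show ?thesis by simp
  qed
  have "marginal E w r \<alpha> s (Delta E d) y = bernoulli_prod r (Delta E d) y" for s y
    using network din_Delta_max_path_edges[of E] unfolding d
    by (intro marginal_pure_principals)
      (auto simp: contractor_network_def pure_principal_def)
  then have last: "marginal E w r \<alpha> (t - (d - 1)) (Delta E (d - 1)) z
      = chain_sum (\<lambda>j. cfgs (Delta E j)) (\<lambda>j. qcond E w r \<alpha> (Delta E j))
          (bernoulli_prod r (Delta E d)) d (d - 1) z" for z
    using unroll[of "d - 1"] \<open>k < d\<close> by (simp add: chain_sum_last)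
  from \<open>k < d\<close> have "k \<le> d - 1" by simp
  then show ?thesis
  proof (induction k arbitrary: z rule: inc_induct)
    case base
    show ?case by (rule last)
  next
    case (step k)
    then show ?case by (simp add: unroll chain_sum_step)
  qed
qed

theorem mainTheorem12:
  fixes E :: "('v::finite \<times> 'v) set" and w :: "'v \<Rightarrow> 'v \<Rightarrow> real"
    and r \<alpha> :: "'v \<Rightarrow> real" and d t :: nat and x :: "'v \<Rightarrow> bool"
  assumes "contractor_network E w r \<alpha>"
    and "d = max_path_edges E" and "d > 0" and "t \<ge> d"
  shows "convergent (\<lambda>s. prob_state E w r \<alpha> s x)
    \<and> prob_state E w r \<alpha> t x = stationary E w r \<alpha> x
    \<and> prob_state E w r \<alpha> t x =
      (\<Sum>Z\<in>PiE {1..d} (\<lambda>k. cfgs (Delta E k)).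
          qcond E w r \<alpha> UNIV x (Z 1)
        * (\<Prod>k\<in>{1..<d}. qcond E w r \<alpha> (Delta E k) (Z k) (Z (Suc k)))
        * (\<Prod>i\<in>Delta E d. r i ^ (of_bool (Z d i) :: nat) * (1 - r i) ^ (1 - of_bool (Z d i))))"
    (is "_ \<and> _ \<and> _ = ?layered")
proof -
  have stable: "prob_state E w r \<alpha> s x = ?layered" if "d \<le> s" for s
    using marginal_Delta_chain_sum[OF assms(1,2) that assms(3), of x]
    by (simp add: marginal_UNIV chain_sum_def bernoulli_prod_def)
  then have limit: "(\<lambda>s. prob_state E w r \<alpha> s x) \<longlonglongrightarrow> ?layered"
    by (intro tendsto_eventually) (auto simp: eventually_sequentially)
  then have "stationary E w r \<alpha> x = ?layered"
    unfolding stationary_def by (rule limI)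
  with limit stable[OF assms(4)] show ?thesis
    by (auto simp: convergent_def)
qed

end
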